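(* Let $n\ge1$ and $1\le k\le\frac{\ln n}{3}$. Then any deterministic algorithm that sorts $n$ elements in $k$ rounds in the rank query model uses, on its worst-case input, at least $\frac{k}{3e}\,n^{1+1/k}$ queries.
   Context: Rank query model: items $x_1,\ldots,x_n$ whose ranks form an unknown permutation of $\{1,\ldots,n\}$; a query asks "How is $\mathrm{rank}(x_i)$ compared to $m$?" with answer "$<$", "$=$" or "$>$"; sorting means determining all ranks. An algorithm runs in $k$ rounds if in each of $k$ rounds it submits a set of queries chosen depending only on answers of earlier rounds, then receives all answers. *)

theory Defs
  imports Complex_Main
begin

text \<open>Items are indexed 0..n-1; an input is a rank assignment
  rank :: nat => nat which is a bijection from {0..<n} onto {1..n}
  (and 0 outside the index range, so that inputs are determined by their
  values on the items).\<close>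

datatype answer = Lt | Eq | Gt

type_synonym query = "nat \<times> nat"

definition valid_input :: "nat \<Rightarrow> (nat \<Rightarrow> nat) \<Rightarrow> bool" where
  "valid_input n rank \<longleftrightarrow> bij_betw rank {..<n} {1..n} \<and> (\<forall>i\<ge>n. rank i = 0)"

definition ans :: "(nat \<Rightarrow> nat) \<Rightarrow> query \<Rightarrow> answer" where
  "ans rank q = (if rank (fst q) < snd q then Lt
                 else if rank (fst q) = snd q then Eq else Gt)"

text \<open>A deterministic multi-round algorithm: in round j it submits the query set
  alg j H, where H is the set of (query, answer) pairs received in earlier rounds.
  hist alg rank j is the information available at the start of round j.\<close>

type_synonym algorithm = "nat \<Rightarrow> (query \<times> answer) set \<Rightarrow> query set"

fun hist :: "algorithm \<Rightarrow> (nat \<Rightarrow> nat) \<Rightarrow> nat \<Rightarrow> (query \<times> answer) set" where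
  "hist alg rank 0 = {}"
| "hist alg rank (Suc j) =
     hist alg rank j \<union> (\<lambda>q. (q, ans rank q)) ` alg j (hist alg rank j)"

definition round_queries :: "algorithm \<Rightarrow> (nat \<Rightarrow> nat) \<Rightarrow> nat \<Rightarrow> query set" where
  "round_queries alg rank j = alg j (hist alg rank j)"

definition sorts_in_rounds :: "nat \<Rightarrow> nat \<Rightarrow> algorithm \<Rightarrow> bool" where
  "sorts_in_rounds n k alg \<longleftrightarrow>
     (\<forall>rank. valid_input n rank \<longrightarrow> (\<forall>j<k. finite (round_queries alg rank j))) \<and>
     (\<exists>out :: (query \<times> answer) set \<Rightarrow> nat \<Rightarrow> nat.
        \<forall>rank. valid_input n rank \<longrightarrow> (\<forall>i<n. out (hist alg rank k) i = rank i))"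

definition num_queries :: "algorithm \<Rightarrow> nat \<Rightarrow> (nat \<Rightarrow> nat) \<Rightarrow> nat" where
  "num_queries alg k rank = (\<Sum>j<k. card (round_queries alg rank j))"

end

theory Submission
  imports Defs "HOL-Combinatorics.Permutations" "HOL-Analysis.Convex"
begin

(* Restrict attention to the n! inputs coming from permutations.  In a round with query set Q,
   the answers to the queries (x, m) \<in> Q of a single item x only depend on the position of
   rank x among the |Q_x| thresholds m, so they take at most 2 |Q_x| + 1 values, and the
   answers to all of Q take at most \<Prod>x (2 |Q_x| + 1) values.  Going through the rounds, the
   number of distinct final histories is therefore bounded by the product of these bounds over
   all rounds along some input.  A sorting algorithm needs n! distinct final histories, and by
   AM-GM the product is at most (1 + 2a)^(kn) if at most kna queries are made.  For
   a = n^(1/k) / (3e) this is below (n/e)^n \<le> n!, because n^(1/k) \<ge> e^3. *)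

definition compare :: "nat \<Rightarrow> nat \<Rightarrow> answer" where
  "compare r m = (if r < m then Lt else if r = m then Eq else Gt)"

lemma ans_eq_compare: "ans rank q = compare (rank (fst q)) (snd q)"
  by (simp add: ans_def compare_def)

lemma range_restrict_compare_eq:
  assumes "finite M"
  shows "range (\<lambda>r. restrict (compare r) M) =
    (\<lambda>r. restrict (compare r) M) ` ({0} \<union> M \<union> Suc ` M)"
proof -
  have "\<exists>r'\<in>{0} \<union> M \<union> Suc ` M. restrict (compare r) M = restrict (compare r') M" for r
  proof -
    consider "r \<in> M" | "r \<notin> M" "{m\<in>M. m < r} = {}" | "r \<notin> M" "{m\<in>M. m < r} \<noteq> {}"
      by blast
    then show ?thesis
    proof cases
      case 1
      then show ?thesis by blast
    next
      case 2
      then have "\<forall>m\<in>M. r < m" by (metis (mono_tags) empty_iff linorder_neqE_nat mem_Collect_eq)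
      then show ?thesis by (auto intro!: bexI[of _ 0] simp: compare_def fun_eq_iff)
    next
      case 3
      define r' where "r' = Suc (Max {m\<in>M. m < r})"
      have "Max {m\<in>M. m < r} \<in> {m\<in>M. m < r}" using 3 assms by (intro Max_in) auto
      moreover have "m \<le> Max {m\<in>M. m < r}" if "m \<in> M" "m < r" for m
        using that assms by (intro Max_ge) auto
      ultimately have r': "r' \<in> Suc ` M" "r' \<le> r" "\<forall>m\<in>M. m < r \<longleftrightarrow> m < r'"
        unfolding r'_def by (auto simp: less_Suc_eq_le)
      have "compare r m = compare r' m" if "m \<in> M" for m
      proof -
        have "m \<noteq> r" "m < r \<longleftrightarrow> m < r'" using that r'(3) \<open>r \<notin> M\<close> by auto
        then show ?thesis using r'(2) unfolding compare_def by auto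
      qed
      then show ?thesis using r'(1) by (intro bexI[of _ r']) auto
    qed
  qed
  then show ?thesis by fast
qed

lemma
  assumes "finite M"
  shows finite_range_restrict_compare: "finite (range (\<lambda>r. restrict (compare r) M))"
    and card_range_restrict_compare_le: "card (range (\<lambda>r. restrict (compare r) M)) \<le> 2 * card M + 1"
proof -
  show "finite (range (\<lambda>r. restrict (compare r) M))"
    unfolding range_restrict_compare_eq[OF assms] using assms by simp
  have "card (range (\<lambda>r. restrict (compare r) M)) \<le> card ({0} \<union> M \<union> Suc ` M)"
    unfolding range_restrict_compare_eq[OF assms] using assms by (intro card_image_le) simp
  also have "\<dots> \<le> card ({0} \<union> M) + card (Suc ` M)"
    by (rule card_Un_le)
  also have "\<dots> \<le> 2 * card M + 1"
    using card_Un_le[of "{0}" M] card_image_le[OF assms, of Suc] by simp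
  finally show "card (range (\<lambda>r. restrict (compare r) M)) \<le> 2 * card M + 1" .
qed

definition answer_pattern_bound :: "nat \<Rightarrow> query set \<Rightarrow> nat" where
  "answer_pattern_bound n Q = (\<Prod>x<n. 2 * card (Q `` {x}) + 1)"

(* Valid inputs vanish beyond n, so on Q their answers are determined by the threshold
   patterns of the n items. *)
lemma answer_patterns_subset:
  assumes "T \<subseteq> Collect (valid_input n)"
  shows "(\<lambda>\<sigma>. restrict (ans \<sigma>) Q) ` T \<subseteq>
    (\<lambda>p. \<lambda>q\<in>Q. if fst q < n then p (fst q) (snd q) else compare 0 (snd q)) `
      (\<Pi>\<^sub>E x\<in>{..<n}. range (\<lambda>r. restrict (compare r) (Q `` {x})))"
proof
  fix f assume "f \<in> (\<lambda>\<sigma>. restrict (ans \<sigma>) Q) ` T"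
  then obtain \<sigma> where \<sigma>: "\<sigma> \<in> T" "f = restrict (ans \<sigma>) Q" by blast
  have zero: "\<sigma> x = 0" if "\<not> x < n" for x
    using \<sigma>(1) assms that unfolding valid_input_def by auto
  define p where "p = (\<lambda>x\<in>{..<n}. restrict (compare (\<sigma> x)) (Q `` {x}))"
  have "f = (\<lambda>q\<in>Q. if fst q < n then p (fst q) (snd q) else compare 0 (snd q))"
    unfolding \<sigma>(2) p_def by (auto simp: fun_eq_iff ans_eq_compare zero)
  moreover have "p \<in> (\<Pi>\<^sub>E x\<in>{..<n}. range (\<lambda>r. restrict (compare r) (Q `` {x})))"
    unfolding p_def by auto
  ultimately show "f \<in> (\<lambda>p. \<lambda>q\<in>Q. if fst q < n then p (fst q) (snd q) else compare 0 (snd q)) `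
      (\<Pi>\<^sub>E x\<in>{..<n}. range (\<lambda>r. restrict (compare r) (Q `` {x})))" by blast
qed

lemma
  assumes "finite Q" "T \<subseteq> Collect (valid_input n)"
  shows finite_answer_patterns: "finite ((\<lambda>\<sigma>. restrict (ans \<sigma>) Q) ` T)"
    and card_answer_patterns_le: "card ((\<lambda>\<sigma>. restrict (ans \<sigma>) Q) ` T) \<le> answer_pattern_bound n Q"
proof -
  define Z where "Z = (\<Pi>\<^sub>E x\<in>{..<n}. range (\<lambda>r. restrict (compare r) (Q `` {x})))"
  define h where "h p = (\<lambda>q\<in>Q. if fst q < n then p (fst q) (snd q) else compare 0 (snd q))"
    for p :: "nat \<Rightarrow> nat \<Rightarrow> answer"
  have fin: "finite (Q `` {x})" for x
    using assms(1) by (simp add: finite_Image)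
  have sub: "(\<lambda>\<sigma>. restrict (ans \<sigma>) Q) ` T \<subseteq> h ` Z"
    unfolding h_def Z_def using answer_patterns_subset[OF assms(2)] .
  have finZ: "finite Z"
    unfolding Z_def using fin by (intro finite_PiE finite_range_restrict_compare) auto
  then show "finite ((\<lambda>\<sigma>. restrict (ans \<sigma>) Q) ` T)"
    using sub finite_subset by blast
  have "card ((\<lambda>\<sigma>. restrict (ans \<sigma>) Q) ` T) \<le> card (h ` Z)"
    using sub finZ by (intro card_mono) auto
  also have "\<dots> \<le> card Z"
    using finZ by (rule card_image_le)
  also have "\<dots> = (\<Prod>x<n. card (range (\<lambda>r. restrict (compare r) (Q `` {x}))))"
    unfolding Z_def by (simp add: card_PiE)
  also have "\<dots> \<le> answer_pattern_bound n Q"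
    unfolding answer_pattern_bound_def
    using card_range_restrict_compare_le[OF fin] by (intro prod_mono) auto
  finally show "card ((\<lambda>\<sigma>. restrict (ans \<sigma>) Q) ` T) \<le> answer_pattern_bound n Q" .
qed

definition weight :: "algorithm \<Rightarrow> nat \<Rightarrow> nat \<Rightarrow> nat \<Rightarrow> (nat \<Rightarrow> nat) \<Rightarrow> nat" where
  "weight alg n k j rank = (\<Prod>i\<in>{j..<k}. answer_pattern_bound n (round_queries alg rank i))"

lemma answer_pattern_bound_pos: "answer_pattern_bound n Q > 0"
  unfolding answer_pattern_bound_def by simp

lemma card_final_histories_le:
  assumes "j \<le> k"
    and "T \<subseteq> Collect (valid_input n)"
    and "\<forall>\<sigma>\<in>T. \<forall>i<k. finite (round_queries alg \<sigma> i)"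
    and "\<forall>\<sigma>\<in>T. hist alg \<sigma> j = H"
    and "\<forall>\<sigma>\<in>T. weight alg n k j \<sigma> \<le> M"
  shows "card ((\<lambda>\<sigma>. hist alg \<sigma> k) ` T) \<le> M"
  using assms
proof (induction j arbitrary: T H M rule: inc_induct)
  case base
  show ?case
  proof (cases "T = {}")
    case False
    then obtain \<sigma> where "\<sigma> \<in> T" by blast
    then have "weight alg n k k \<sigma> \<le> M" "(\<lambda>\<sigma>. hist alg \<sigma> k) ` T = {H}"
      using base.prems(3,4) by auto
    then show ?thesis by (simp add: weight_def)
  qed simp
next
  case (step j)
  define Q where "Q = alg j H"
  define P where "P = answer_pattern_bound n Q"
  define F where "F \<sigma> = restrict (ans \<sigma>) Q" for \<sigma>
  have Q: "round_queries alg \<sigma> j = Q" if "\<sigma> \<in> T" for \<sigma>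
    using step.prems(3) that unfolding Q_def round_queries_def by simp
  have patterns: "finite (F ` T) \<and> card (F ` T) \<le> P"
  proof (cases "T = {}")
    case False
    then obtain \<sigma> where "\<sigma> \<in> T" by blast
    then have "finite Q"
      using step.prems(2) step.hyps(2) Q by metis
    then show ?thesis
      unfolding F_def P_def using step.prems(1)
      by (simp add: finite_answer_patterns card_answer_patterns_le)
  qed simp
  have class_bound: "card ((\<lambda>\<sigma>. hist alg \<sigma> k) ` {\<sigma>\<in>T. F \<sigma> = f}) \<le> M div P" for f
  proof (rule step.IH)
    show "{\<sigma>\<in>T. F \<sigma> = f} \<subseteq> Collect (valid_input n)"
      "\<forall>\<sigma>\<in>{\<sigma>\<in>T. F \<sigma> = f}. \<forall>i<k. finite (round_queries alg \<sigma> i)"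
      using step.prems(1,2) by auto
    show "\<forall>\<sigma>\<in>{\<sigma>\<in>T. F \<sigma> = f}. hist alg \<sigma> (Suc j) = H \<union> (\<lambda>q. (q, f q)) ` Q"
    proof
      fix \<sigma> assume "\<sigma> \<in> {\<sigma>\<in>T. F \<sigma> = f}"
      then have "\<sigma> \<in> T" "\<forall>q\<in>Q. ans \<sigma> q = f q"
        unfolding F_def by auto
      then show "hist alg \<sigma> (Suc j) = H \<union> (\<lambda>q. (q, f q)) ` Q"
        using step.prems(3) Q unfolding round_queries_def by (auto intro!: image_cong)
    qed
    show "\<forall>\<sigma>\<in>{\<sigma>\<in>T. F \<sigma> = f}. weight alg n k (Suc j) \<sigma> \<le> M div P"
    proof
      fix \<sigma> assume "\<sigma> \<in> {\<sigma>\<in>T. F \<sigma> = f}"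
      then have "\<sigma> \<in> T" by simp
      then have "weight alg n k (Suc j) \<sigma> * P \<le> M"
        using step.prems(4) step.hyps(2) Q
        by (simp add: weight_def P_def prod.atLeast_Suc_lessThan mult.commute)
      then show "weight alg n k (Suc j) \<sigma> \<le> M div P"
        using answer_pattern_bound_pos by (simp add: P_def less_eq_div_iff_mult_less_eq)
    qed
  qed
  have "(\<lambda>\<sigma>. hist alg \<sigma> k) ` T = (\<Union>f\<in>F ` T. (\<lambda>\<sigma>. hist alg \<sigma> k) ` {\<sigma>\<in>T. F \<sigma> = f})"
    by auto
  also have "card \<dots> \<le> (\<Sum>f\<in>F ` T. card ((\<lambda>\<sigma>. hist alg \<sigma> k) ` {\<sigma>\<in>T. F \<sigma> = f}))"
    using patterns by (intro card_UN_le) simp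
  also have "\<dots> \<le> card (F ` T) * (M div P)"
    using sum_bounded_above[of "F ` T" _ "M div P"] class_bound by simp
  also have "\<dots> \<le> P * (M div P)"
    using patterns by (intro mult_right_mono) simp_all
  also have "\<dots> \<le> M"
    by simp
  finally show ?case .
qed

lemma sum_card_Image_le:
  assumes "finite X" "finite Q"
  shows "(\<Sum>x\<in>X. card (Q `` {x})) \<le> card Q"
proof -
  have "(\<Sum>x\<in>X. card (Q `` {x})) = card (Sigma X (\<lambda>x. Q `` {x}))"
    using assms by (simp add: card_SigmaI)
  also have "\<dots> \<le> card Q"
    using assms by (intro card_mono) auto
  finally show ?thesis .
qed

lemma prod_le_power_if_sum_le:
  fixes x :: "'a \<Rightarrow> real" and a :: real
  assumes "finite S" "\<And>i. i \<in> S \<Longrightarrow> 0 \<le> x i" "sum x S \<le> card S * a"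
  shows "prod x S \<le> a ^ card S"
proof (cases "S = {}")
  case False
  then have "card S > 0" using assms(1) by (simp add: card_gt_0_iff)
  have "prod x S powr (1 / card S) \<le> (\<Sum>i\<in>S. x i / card S)"
    using arith_geom_mean[OF assms(1) False] assms(2) by blast
  also have "\<dots> \<le> a"
    using assms(3) \<open>card S > 0\<close> by (simp add: sum_divide_distrib[symmetric] field_simps)
  finally have "(prod x S powr (1 / card S)) ^ card S \<le> a ^ card S"
    by (intro power_mono) simp_all
  also have "(prod x S powr (1 / card S)) ^ card S = prod x S"
    using \<open>card S > 0\<close> assms(2)
    by (simp add: powr_realpow'[symmetric] powr_powr prod_nonneg)
  finally show ?thesis .
qed simp

lemma weight_le_power:
  assumes "\<forall>i<k. finite (round_queries alg rank i)" "0 \<le> a"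
    and "real (num_queries alg k rank) \<le> real (k * n) * a"
  shows "real (weight alg n k 0 rank) \<le> (1 + 2 * a) ^ (k * n)"
proof -
  define c where "c p = real (card (round_queries alg rank (fst p) `` {snd p}))" for p
  have "real (weight alg n k 0 rank) = (\<Prod>i<k. \<Prod>x<n. 1 + 2 * c (i, x))"
    by (simp add: weight_def answer_pattern_bound_def c_def atLeast0LessThan)
  also have "\<dots> = (\<Prod>p\<in>{..<k} \<times> {..<n}. 1 + 2 * c p)"
    by (simp add: prod.cartesian_product)
  also have "\<dots> \<le> (1 + 2 * a) ^ card ({..<k} \<times> {..<n})"
  proof (rule prod_le_power_if_sum_le)
    have "sum c ({..<k} \<times> {..<n}) = (\<Sum>i<k. \<Sum>x<n. c (i, x))"
      by (simp add: sum.cartesian_product)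
    also have "\<dots> \<le> (\<Sum>i<k. real (card (round_queries alg rank i)))"
      using assms(1) by (intro sum_mono) (simp add: c_def sum_card_Image_le flip: of_nat_sum)
    also have "\<dots> \<le> real (k * n) * a"
      using assms(3) by (simp add: num_queries_def)
    finally have "2 * sum c ({..<k} \<times> {..<n}) \<le> real (card ({..<k} \<times> {..<n})) * (2 * a)"
      by simp
    then show "(\<Sum>p\<in>{..<k} \<times> {..<n}. 1 + 2 * c p)
      \<le> real (card ({..<k} \<times> {..<n})) * (1 + 2 * a)"
      by (simp add: sum.distrib distrib_left flip: sum_distrib_left)
  qed (simp_all add: c_def)
  finally show ?thesis by simp
qed

lemma power_div_exp_le_fact: "(real n / exp 1) ^ n \<le> fact n"
proof -
  have series: "(\<lambda>i. real n ^ i / fact i) sums exp (real n)"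
    using exp_converges[of "real n"] by (simp add: divide_inverse mult.commute)
  then have "real n ^ n / fact n \<le> exp (real n)"
    using sum_le_suminf[of "\<lambda>i. real n ^ i / fact i" "{n}"] by (simp add: sums_iff)
  also have "exp (real n) = exp 1 ^ n"
    by (simp add: exp_of_nat_mult[symmetric])
  finally show ?thesis
    by (simp add: power_divide field_simps)
qed

lemma exp1_ge_5_div_2: "5 / 2 \<le> exp (1::real)"
proof -
  have "(5 / 2 :: real) \<le> (1 + 1 / 8) ^ 8"
    by (simp add: power_divide)
  also have "\<dots> \<le> exp 1"
    using exp_ge_one_plus_x_over_n_power_n[of 8 1] by simp
  finally show ?thesis .
qed

lemma one_add_two_div_three_exp1_lt:
  fixes N :: real
  assumes "exp 3 \<le> N"
  shows "1 + 2 * (N / (3 * exp 1)) < N / 3"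
proof -
  define e where "e = exp (1::real)"
  have e: "5 / 2 \<le> e" unfolding e_def by (rule exp1_ge_5_div_2)
  have "3 < (5 / 2) ^ 2 * (e - 2)"
    using e by (simp add: power2_eq_square algebra_simps)
  also have "\<dots> \<le> e ^ 2 * (e - 2)"
    using e by (intro mult_right_mono power_mono) simp_all
  finally have "3 * e < e ^ 3 * (e - 2)"
    using e by (simp add: power2_eq_square power3_eq_cube)
  also have "e ^ 3 * (e - 2) \<le> N * (e - 2)"
    using assms e by (intro mult_right_mono) (simp_all add: e_def exp_of_nat_mult[symmetric])
  finally have "3 * e + 2 * N < N * e"
    by (simp add: algebra_simps)
  then show ?thesis
    using e by (simp add: e_def[symmetric] field_simps)
qed

lemma power_one_add_root_lt_power_div_exp:
  assumes "n \<ge> 1" "k \<ge> 1" "real k \<le> ln (real n) / 3"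
  shows "(1 + 2 * (real n powr (1 / k) / (3 * exp 1))) ^ (k * n) < (real n / exp 1) ^ n"
proof -
  define N where "N = real n powr (1 / k)"
  define b where "b = 1 + 2 * (N / (3 * exp 1))"
  have "N ^ k = real n"
    using assms(1,2) by (simp add: N_def powr_realpow'[symmetric] powr_powr)
  have "exp 3 \<le> N"
  proof -
    have "3 \<le> ln (real n) / k"
      using assms(2,3) by (simp add: field_simps)
    then show ?thesis
      using assms(1) by (simp add: N_def powr_def)
  qed
  then have "b < N / 3"
    unfolding b_def by (rule one_add_two_div_three_exp1_lt)
  then have "b ^ k < (N / 3) ^ k"
    using assms(2) by (intro power_strict_mono) (simp_all add: b_def N_def)
  also have "\<dots> = real n / 3 ^ k"
    by (simp add: power_divide \<open>N ^ k = real n\<close>)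
  also have "\<dots> \<le> real n / exp 1"
  proof (rule divide_left_mono)
    show "exp 1 \<le> (3::real) ^ k"
      using exp_le power_increasing[of 1 k "3::real"] assms(2) by simp
  qed simp_all
  finally have "(b ^ k) ^ n < (real n / exp 1) ^ n"
    using assms(1) by (intro power_strict_mono) (simp_all add: b_def N_def)
  then show ?thesis
    by (simp add: b_def N_def power_mult)
qed

definition input_of_perm :: "nat \<Rightarrow> (nat \<Rightarrow> nat) \<Rightarrow> nat \<Rightarrow> nat" where
  "input_of_perm n p i = (if i < n then Suc (p i) else 0)"

lemma valid_input_of_perm:
  assumes "p permutes {..<n}"
  shows "valid_input n (input_of_perm n p)"
proof -
  have "inj_on (input_of_perm n p) {..<n}"
    using permutes_inj[OF assms] by (auto simp: inj_on_def input_of_perm_def dest: injD)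
  moreover have "input_of_perm n p ` {..<n} = {1..n}"
  proof -
    have "input_of_perm n p ` {..<n} = Suc ` p ` {..<n}"
      by (auto simp: input_of_perm_def)
    also have "\<dots> = {1..n}"
      by (simp add: permutes_image[OF assms] image_Suc_lessThan)
    finally show ?thesis .
  qed
  ultimately show ?thesis
    by (simp add: valid_input_def bij_betw_def input_of_perm_def)
qed

lemma card_inputs_of_perms: "card (input_of_perm n ` {p. p permutes {..<n}}) = fact n"
proof -
  have "inj_on (input_of_perm n) {p. p permutes {..<n}}"
  proof (rule inj_onI)
    fix p p' assume perms: "p \<in> {p. p permutes {..<n}}" "p' \<in> {p. p permutes {..<n}}"
      and eq: "input_of_perm n p = input_of_perm n p'"
    have "p x = p' x" for x
      using fun_cong[OF eq, of x] permutes_not_in[of p] permutes_not_in[of p'] perms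
      by (cases "x < n") (auto simp: input_of_perm_def)
    then show "p = p'" ..
  qed
  then show ?thesis
    by (simp add: card_image card_permutations)
qed

lemma inj_on_final_history:
  assumes "sorts_in_rounds n k alg"
  shows "inj_on (\<lambda>rank. hist alg rank k) (Collect (valid_input n))"
proof (rule inj_onI)
  obtain out where out:
    "\<And>rank i. valid_input n rank \<Longrightarrow> i < n \<Longrightarrow> out (hist alg rank k) i = rank i"
    using assms unfolding sorts_in_rounds_def by blast
  fix \<sigma> \<tau> assume "\<sigma> \<in> Collect (valid_input n)" "\<tau> \<in> Collect (valid_input n)"
    and "hist alg \<sigma> k = hist alg \<tau> k"
  then show "\<sigma> = \<tau>"
    using out by (metis mem_Collect_eq not_less valid_input_def ext)
qed

lemma finite_round_queries:
  assumes "sorts_in_rounds n k alg" "valid_input n rank"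
  shows "\<forall>i<k. finite (round_queries alg rank i)"
  using assms unfolding sorts_in_rounds_def by blast

lemma exists_input_fact_le_weight:
  assumes "sorts_in_rounds n k alg"
  obtains \<sigma> where "valid_input n \<sigma>" "fact n \<le> weight alg n k 0 \<sigma>"
proof -
  define T where "T = input_of_perm n ` {p. p permutes {..<n}}"
  have T_valid: "T \<subseteq> Collect (valid_input n)"
    unfolding T_def using valid_input_of_perm by blast
  have "finite T"
    unfolding T_def by (simp add: finite_permutations)
  have "T \<noteq> {}"
    unfolding T_def using permutes_id by blast
  define W where "W = Max (weight alg n k 0 ` T)"
  have "W \<in> weight alg n k 0 ` T"
    unfolding W_def using \<open>finite T\<close> \<open>T \<noteq> {}\<close> by (intro Max_in) auto
  then obtain \<sigma> where \<sigma>: "valid_input n \<sigma>" "weight alg n k 0 \<sigma> = W"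
    using T_valid by blast
  have "fact n = card ((\<lambda>rank. hist alg rank k) ` T)"
    using inj_on_subset[OF inj_on_final_history[OF assms] T_valid]
    by (simp add: card_image T_def card_inputs_of_perms)
  also have "\<dots> \<le> W"
    using T_valid finite_round_queries[OF assms] \<open>finite T\<close>
    by (intro card_final_histories_le[where H = "{}"]) (auto simp: W_def)
  finally show ?thesis
    using that \<sigma> by simp
qed

theorem corollary1:
  fixes n k :: nat and alg :: algorithm
  assumes "n \<ge> 1" and "k \<ge> 1" and "real k \<le> ln (real n) / 3"
    and "sorts_in_rounds n k alg"
  shows "\<exists>rank. valid_input n rank \<and>
           real (num_queries alg k rank) \<ge> real k / (3 * exp 1) * real n powr (1 + 1 / real k)"
proof (rule ccontr)
  assume neg: "\<not> ?thesis"
  define a where "a = real n powr (1 / k) / (3 * exp 1)"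
  obtain \<sigma> where \<sigma>: "valid_input n \<sigma>" and "fact n \<le> weight alg n k 0 \<sigma>"
    using exists_input_fact_le_weight[OF assms(4)] .
  have few_queries: "real (num_queries alg k \<sigma>) \<le> real (k * n) * a"
    using neg \<sigma> assms(1) by (auto simp: a_def powr_add not_le)
  have "fact n \<le> real (weight alg n k 0 \<sigma>)"
    using \<open>fact n \<le> weight alg n k 0 \<sigma>\<close> by (metis of_nat_fact of_nat_le_iff)
  also have "\<dots> \<le> (1 + 2 * a) ^ (k * n)"
    using finite_round_queries[OF assms(4) \<sigma>] few_queries
    by (intro weight_le_power) (simp_all add: a_def)
  also have "\<dots> < (real n / exp 1) ^ n"
    unfolding a_def by (rule power_one_add_root_lt_power_div_exp[OF assms(1-3)])
  also have "\<dots> \<le> fact n"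
    by (rule power_div_exp_le_fact)
  finally show False
    by simp
qed

end
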